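(* For every integer $n \geq 0$, the following polynomial identity holds in $\mathbb{C}[X]$: $$X^{\underline{n}} = B_n^* + \sum_{k=1}^{n} \frac{n}{k}\, s(n-1,k-1)\, B_k(X).$$
   Context: For $n \geq 0$, $X^{\underline{n}} := X(X-1)\cdots(X-n+1)$ ($X^{\underline{0}}=1$). The (signed) Stirling numbers of the first kind $s(n,k)$ ($0\le k\le n$) are defined by $X^{\underline{n}} = \sum_{k=0}^{n} s(n,k) X^k$ for all $n \ge 0$, with $s(n,k)=0$ when $n<k$. The Bernoulli polynomials $B_n(X)$ are defined by $\frac{t e^{Xt}}{e^t-1} = \sum_{n \ge 0} B_n(X) \frac{t^n}{n!}$. The Bernoulli numbers of the second kind $B_n^*$ are defined by $\frac{t}{\log(1+t)} = \sum_{n \ge 0} B_n^* \frac{t^n}{n!}$ (equivalently $B_n^* = \int_0^1 x^{\underline{n}}\,dx$). *)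

theory Defs
  imports Complex_Main "HOL-Computational_Algebra.Computational_Algebra"
begin

definition ffact_poly :: "nat \<Rightarrow> 'a::comm_ring_1 poly" where
  "ffact_poly n = (\<Prod>i<n. [:- of_nat i, 1:])"

text \<open>Signed Stirling numbers of the first kind, defined as the coefficients of the
falling factorial: X^(n falling) = sum_k s(n,k) X^k (so s(n,k) = 0 for n < k).\<close>
definition stirling1 :: "nat \<Rightarrow> nat \<Rightarrow> int" where
  "stirling1 n k = coeff (ffact_poly n :: int poly) k"

definition bernoulli_num :: "nat \<Rightarrow> complex" where
  "bernoulli_num n = fact n * fps_nth (fps_X / (fps_exp 1 - 1)) n"

text \<open>Bernoulli polynomials: t e^(Xt)/(e^t-1) = (t/(e^t-1)) * e^(Xt), whose coefficient of
t^n/n! is the binomial convolution below.\<close>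
definition bernpoly :: "nat \<Rightarrow> complex poly" where
  "bernpoly n = (\<Sum>k\<le>n. smult (of_nat (n choose k) * bernoulli_num k) (monom 1 (n - k)))"

definition bernoulli2 :: "nat \<Rightarrow> complex" where
  "bernoulli2 n = fact n * fps_nth (fps_X / fps_ln 1) n"

end

theory Submission
  imports Defs
begin

text \<open>
  Both sides are compared at an arbitrary point x, where the left side is n! (x choose n),
  i.e. n! times the coefficient of t^n in (1 + t)^x. Substituting t := log (1 + t) into
  F(t) = t e^(xt) / (e^t - 1) = \<Sum> B_k(x) t^k / k! gives t F(log (1 + t)) = log (1 + t) (1 + t)^x,
  so writing F = 1 + t G we get (1 + t)^x = t / log (1 + t) + t G(log (1 + t)). The first
  summand contributes B*_n / n!; the second is expanded with log (1 + t)^j / j! = \<Sum> s(n,j) t^n / n!,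
  which is (1 + t)^y = exp (y log (1 + t)) compared coefficientwise in y.
\<close>

lemma poly_ffact_poly: "poly (ffact_poly n) x = fact n * (x gchoose n)"
  for x :: "'a::field_char_0"
  by (simp add: ffact_poly_def poly_prod gbinomial_mult_fact atLeast0LessThan)

lemma ffact_poly_Suc: "ffact_poly (Suc n) = ffact_poly n * [:- of_nat n, 1:]"
  by (simp add: ffact_poly_def lessThan_Suc mult.commute)

lemma coeff_ffact_poly: "coeff (ffact_poly n :: 'a::comm_ring_1 poly) k = of_int (stirling1 n k)"
proof (induction n arbitrary: k)
  case 0
  show ?case by (simp add: stirling1_def ffact_poly_def)
next
  case (Suc n)
  then show ?case
    by (cases k) (simp_all add: stirling1_def ffact_poly_Suc mult_pCons_right)
qed

lemma fps_exp_compose_ln: "fps_exp c oo fps_ln 1 = fps_binomial c"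
  for c :: "'a::field_char_0"
proof -
  let ?A = "fps_exp c oo fps_ln 1"
  have "fps_deriv ?A = fps_const c * ?A * inverse (1 + fps_X)"
    by (simp add: fps_compose_deriv fps_ln_deriv fps_compose_mult_distrib)
  then have "fps_deriv ?A = fps_const c * ?A / (1 + fps_X)"
    by (simp add: fps_divide_unit)
  then show ?thesis
    by (simp add: fps_binomial_ODE_unique)
qed

lemma fps_ln_power_nth:
  fixes j n :: nat
  shows "(fps_ln 1 ^ j :: 'a::field_char_0 fps) $ n = fact j * of_int (stirling1 n j) / fact n"
proof -
  let ?p = "\<Sum>i\<le>n. monom ((fps_ln 1 ^ i :: 'a fps) $ n / fact i) i"
  have "poly ?p y = poly (smult (1 / fact n) (ffact_poly n)) y" for y :: 'a
  proof -
    have "poly ?p y = (fps_exp y oo fps_ln 1) $ n"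
      by (simp add: poly_sum poly_monom fps_compose_nth fps_exp_def atLeast0AtMost mult_ac)
    also have "\<dots> = poly (smult (1 / fact n) (ffact_poly n)) y"
      by (simp add: fps_exp_compose_ln poly_ffact_poly)
    finally show ?thesis .
  qed
  then have "?p = smult (1 / fact n) (ffact_poly n)"
    by (simp add: poly_eq_poly_eq_iff[symmetric] fun_eq_iff)
  then have "coeff ?p j = coeff (smult (1 / fact n) (ffact_poly n)) j"
    by simp
  moreover have "(fps_ln 1 ^ j :: 'a fps) $ n = 0" if "n < j"
  proof -
    obtain h :: "'a fps" where "fps_ln 1 = fps_X * h"
      using fps_X_dvd_fps_ln by (metis dvdE)
    then show ?thesis
      using that by (simp add: power_mult_distrib fps_X_power_mult_nth)
  qed
  ultimately show ?thesis
    by (cases "j \<le> n") (simp_all add: coeff_sum coeff_ffact_poly field_simps)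
qed

lemma fps_X_div_mult_cancel:
  fixes f :: "'a::field fps"
  assumes "f $ 0 = 0" "f $ 1 \<noteq> 0"
  shows "fps_X / f * f = fps_X"
proof -
  have "subdegree f = 1"
    using assms by (intro subdegreeI) auto
  moreover have "f \<noteq> 0"
    using assms by auto
  ultimately have "f dvd fps_X"
    by (simp add: fps_dvd_iff)
  then show ?thesis
    by (rule dvd_div_mult_self)
qed

lemma fps_X_div_nth_0:
  fixes f :: "'a::field fps"
  assumes "f $ 0 = 0" "f $ 1 \<noteq> 0"
  shows "(fps_X / f) $ 0 = 1 / f $ 1"
proof -
  have "(fps_X / f) $ 0 * f $ 1 = (fps_X / f * f) $ 1"
    using assms(1) by (simp add: fps_mult_nth)
  also have "\<dots> = 1"
    by (simp only: fps_X_div_mult_cancel[OF assms]) simp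
  finally have "(fps_X / f) $ 0 * f $ 1 = 1" .
  then show ?thesis
    using assms(2) by (simp add: field_simps)
qed

lemma fps_exp_minus_one_compose_ln: "(fps_exp 1 - 1) oo fps_ln 1 = (fps_X :: 'a::field_char_0 fps)"
  using fps_inv_right[of "fps_exp 1 - 1"] fps_ln_fps_exp_inv[of "1::'a"] by simp

lemma bernoulli_fps_compose_ln:
  "fps_X * (fps_X / (fps_exp 1 - 1) oo fps_ln 1) = (fps_ln 1 :: 'a::field_char_0 fps)"
proof -
  have "fps_X / (fps_exp 1 - 1) * (fps_exp 1 - 1) = (fps_X :: 'a fps)"
    by (rule fps_X_div_mult_cancel) simp_all
  then have "(fps_X / (fps_exp 1 - 1) oo fps_ln 1) * ((fps_exp 1 - 1) oo fps_ln 1) = (fps_X oo fps_ln 1 :: 'a fps)"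
    by (metis fps_compose_mult_distrib fps_ln_0)
  then show ?thesis
    by (simp add: fps_exp_minus_one_compose_ln mult.commute)
qed

lemma fps_binomial_eq_bernoulli_compose_ln:
  fixes x :: "'a::field_char_0"
  defines "F \<equiv> fps_X / (fps_exp 1 - 1) * fps_exp x"
  shows "fps_binomial x = fps_X / fps_ln 1 + fps_X * (fps_shift 1 F oo fps_ln 1)"
proof -
  let ?L = "fps_ln 1 :: 'a fps"
  define G where "G = fps_shift 1 F"
  have "F $ 0 = 1"
    by (simp add: F_def fps_X_div_nth_0)
  then have "F = 1 + fps_X * G"
    by (intro fps_ext) (auto simp: G_def)
  then have "F oo ?L = 1 + ?L * (G oo ?L)"
    by (simp add: fps_compose_add_distrib fps_compose_mult_distrib)
  moreover have "fps_X * (F oo ?L) = ?L * fps_binomial x"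
    by (simp add: F_def fps_compose_mult_distrib fps_exp_compose_ln bernoulli_fps_compose_ln
        flip: mult.assoc)
  ultimately have "fps_X + fps_X * ?L * (G oo ?L) = ?L * fps_binomial x"
    by (simp add: algebra_simps)
  moreover have "fps_X / ?L * ?L = fps_X"
    by (rule fps_X_div_mult_cancel) (simp_all add: fps_ln_nth)
  ultimately have "?L * (fps_X / ?L + fps_X * (G oo ?L)) = ?L * fps_binomial x"
    by (simp add: algebra_simps)
  moreover have "?L $ 1 = 1"
    by (simp add: fps_ln_nth)
  ultimately show ?thesis
    by (auto simp: G_def)
qed

lemma poly_bernpoly: "poly (bernpoly k) x = fact k * (fps_X / (fps_exp 1 - 1) * fps_exp x) $ k"
proof -
  have "poly (bernpoly k) x = (\<Sum>j\<le>k. of_nat (k choose j) * bernoulli_num j * x ^ (k - j))"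
    by (simp add: bernpoly_def poly_sum poly_monom)
  also have "\<dots> = (\<Sum>j\<le>k. fact k * ((fps_X / (fps_exp 1 - 1)) $ j * (x ^ (k - j) / fact (k - j))))"
    by (intro sum.cong) (simp_all add: bernoulli_num_def binomial_fact field_simps)
  also have "\<dots> = fact k * (fps_X / (fps_exp 1 - 1) * fps_exp x) $ k"
    by (simp add: fps_mult_nth sum_distrib_left atLeast0AtMost)
  finally show ?thesis .
qed

lemma fact_mult_gchoose_eq_bernoulli:
  fixes x :: complex
  shows "fact n * (x gchoose n) = bernoulli2 n +
    (\<Sum>k=1..n. of_nat n / of_nat k * of_int (stirling1 (n - 1) (k - 1)) * poly (bernpoly k) x)"
proof (cases n)
  case 0
  then show ?thesis
    using fps_binomial_eq_bernoulli_compose_ln[of x, THEN arg_cong, of "\<lambda>f. f $ 0"]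
    by (simp add: bernoulli2_def)
next
  case (Suc m)
  define F where "F = fps_X / (fps_exp 1 - 1) * fps_exp x"
  have gchoose_Suc: "x gchoose Suc m = (fps_X / fps_ln 1) $ Suc m + (\<Sum>i\<le>m. F $ Suc i * (fps_ln 1 ^ i) $ m)"
    using fps_binomial_eq_bernoulli_compose_ln[of x, THEN arg_cong, of "\<lambda>f. f $ Suc m"]
    by (simp add: F_def fps_compose_nth atLeast0AtMost)
  have "(\<Sum>k=1..Suc m. of_nat (Suc m) / of_nat k * of_int (stirling1 m (k - 1)) * poly (bernpoly k) x)
      = (\<Sum>i\<le>m. of_nat (Suc m) / of_nat (Suc i) * of_int (stirling1 m i) * poly (bernpoly (Suc i)) x)"
    by (simp only: One_nat_def sum.atLeast_Suc_atMost_Suc_shift atLeast0AtMost comp_def) simp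
  also have "\<dots> = (\<Sum>i\<le>m. fact (Suc m) * (F $ Suc i * (fps_ln 1 ^ i) $ m))"
    by (intro sum.cong) (simp_all add: poly_bernpoly fps_ln_power_nth F_def fact_Suc field_simps
        del: of_nat_Suc)
  also have "\<dots> = fact (Suc m) * (\<Sum>i\<le>m. F $ Suc i * (fps_ln 1 ^ i) $ m)"
    by (simp add: sum_distrib_left)
  finally show ?thesis
    using Suc gchoose_Suc by (simp add: bernoulli2_def distrib_left)
qed

theorem theorem3:
  fixes n :: nat
  shows "(ffact_poly n :: complex poly) =
    [:bernoulli2 n:] +
    (\<Sum>k=1..n. smult (of_nat n / of_nat k * of_int (stirling1 (n - 1) (k - 1))) (bernpoly k))"
  by (simp add: poly_eq_poly_eq_iff[symmetric] fun_eq_iff poly_sum poly_ffact_poly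
      fact_mult_gchoose_eq_bernoulli)

end
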